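(* Let $\lambda<\kappa$ be infinite cardinals with $\kappa\le\aleph_\omega$. Then every $(\lambda,\kappa)$-graph contains an $(\aleph_0,\kappa)$-subgraph.
   Context: For infinite cardinals $\lambda<\kappa$, a $(\lambda,\kappa)$-graph is a bipartite graph with bipartition $(A,B)$, $|A|=\lambda$, $|B|=\kappa$, in which every vertex $b\in B$ has infinitely many neighbours in $A$. An $(\aleph_0,\kappa)$-subgraph of such a graph is a subgraph with bipartition $(C,D)$, $C\subseteq A$, $D\subseteq B$, which is itself an $(\aleph_0,\kappa)$-graph. *)

theory Defs
  imports Main
begin

unbundle cardinal_syntax

text \<open>Cardinals are represented by sets via the library's card_of (|A|) with
ordLeq, ordLess, ordIso (\<le>o, <o, =o); natLeq is aleph_0.\<close>

primrec is_aleph :: "nat \<Rightarrow> 'a set \<Rightarrow> bool" where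
  "is_aleph 0 A \<longleftrightarrow> |A| =o natLeq"
| "is_aleph (Suc n) A \<longleftrightarrow> (\<exists>C. C \<subseteq> A \<and> is_aleph n C \<and> |A| =o cardSuc |C| )"

text \<open>is_aleph_omega A: A has cardinality aleph_omega, the least cardinal
above all aleph_n: A contains subsets of every size aleph_n, and every
strictly smaller cardinality is bounded by some aleph_n.\<close>
definition is_aleph_omega :: "'a set \<Rightarrow> bool" where
  "is_aleph_omega A \<longleftrightarrow>
     (\<forall>n. \<exists>D. D \<subseteq> A \<and> is_aleph n D) \<and>
     (\<forall>C. C \<subseteq> A \<and> |C| <o |A| \<longrightarrow> (\<exists>n D. D \<subseteq> A \<and> is_aleph n D \<and> |C| \<le>o |D| ))"

definition card_le_aleph_omega :: "'a set \<Rightarrow> bool" where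
  "card_le_aleph_omega A \<longleftrightarrow> (\<exists>n. is_aleph n A) \<or> is_aleph_omega A"

text \<open>Together with the cardinality
conditions |A| = \<lambda>, |B| = \<kappa> this is a (\<lambda>,\<kappa>)-graph.\<close>
definition inf_nbr_bigraph :: "('a \<times> 'b) set \<Rightarrow> 'a set \<Rightarrow> 'b set \<Rightarrow> bool" where
  "inf_nbr_bigraph E A B \<longleftrightarrow>
     E \<subseteq> A \<times> B \<and> (\<forall>b\<in>B. infinite {a \<in> A. (a, b) \<in> E})"

end

theory Submission
  imports Defs
begin

text \<open>First suppose \<kappa> is regular and every infinite cardinal up to \<lambda> is regular, and induct
on \<lambda>. If \<lambda> is uncountable, every b \<in> B has a countably infinite set of neighbours, which by
regularity of \<lambda> lies below some a \<in> A in a well-order of A of type \<lambda>. Since \<kappa> > \<lambda> is regular,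
\<kappa> many b share the same bound a, and the induction hypothesis applies to these b together
with the predecessors of a, a set of size < \<lambda>. Below aleph_omega all infinite cardinals are
regular, which settles \<kappa> = aleph_n. For \<kappa> = aleph_omega apply the regular case to subsets of
B of size aleph_n for all large n; the union of these countably many subgraphs is the required
one, since its B-side is not bounded by any aleph_n.\<close>

text \<open>For infinite cardinals the library's \<open>stable\<close> is regularity, so this says that every
infinite cardinal up to |A| is regular.\<close>

definition hereditarily_stable :: "'a set \<Rightarrow> bool" where
  "hereditarily_stable A \<longleftrightarrow> (\<forall>X \<subseteq> A. infinite X \<longrightarrow> stable |X| )"

definition has_aleph0_subgraph :: "('a \<times> 'b) set \<Rightarrow> 'a set \<Rightarrow> 'b set \<Rightarrow> bool" where
  "has_aleph0_subgraph E A B \<longleftrightarrow>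
     (\<exists>C D F. C \<subseteq> A \<and> D \<subseteq> B \<and> F \<subseteq> E \<and> |C| =o natLeq \<and> |D| =o |B| \<and> inf_nbr_bigraph F C D)"

subsection \<open>The finite alephs\<close>

lemma ordIso_natLeq_iff_ordLeq_natLeq:
  assumes "infinite A"
  shows "|A| =o natLeq \<longleftrightarrow> |A| \<le>o natLeq"
proof -
  have "natLeq \<le>o |A|"
    using assms infinite_iff_natLeq_ordLeq by blast
  then show ?thesis
    by (simp add: ordIso_iff_ordLeq)
qed

lemma card_of_UN_ordIso_natLeq:
  assumes "|I| \<le>o natLeq" and "i \<in> I" and "\<And>i. i \<in> I \<Longrightarrow> |C i| =o natLeq"
  shows "|\<Union>i\<in>I. C i| =o natLeq"
proof -
  have nat: "natLeq =o |UNIV :: nat set|"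
    by (rule ordIso_symmetric[OF card_of_nat])
  have "|I| \<le>o |UNIV :: nat set|"
    using assms(1) nat by (rule ordLeq_ordIso_trans)
  moreover have "\<forall>j\<in>I. |C j| \<le>o |UNIV :: nat set|"
    using ordIso_imp_ordLeq[OF ordIso_transitive[OF assms(3) nat]] by blast
  ultimately have "|\<Union>i\<in>I. C i| \<le>o |UNIV :: nat set|"
    by (rule card_of_UNION_ordLeq_infinite[OF infinite_UNIV_nat])
  then have le: "|\<Union>i\<in>I. C i| \<le>o natLeq"
    using card_of_nat by (rule ordLeq_ordIso_trans)
  have "natLeq \<le>o |C i|"
    using ordIso_imp_ordLeq[OF ordIso_symmetric[OF assms(3)[OF assms(2)]]] .
  then have "infinite (C i)"
    using infinite_iff_natLeq_ordLeq by blast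
  then have "infinite (\<Union>i\<in>I. C i)"
    using assms(2) by (meson UN_upper infinite_super)
  then show ?thesis
    using le ordIso_natLeq_iff_ordLeq_natLeq by blast
qed

lemma hereditarily_stable_ordLeq:
  assumes "|A| \<le>o |X|" and "hereditarily_stable X"
  shows "hereditarily_stable A"
  unfolding hereditarily_stable_def
proof (intro allI impI)
  fix Z assume Z: "Z \<subseteq> A" "infinite Z"
  have "|Z| \<le>o |X|"
    using card_of_mono1[OF Z(1)] assms(1) by (rule ordLeq_transitive)
  then obtain W where W: "W \<subseteq> X" "|Z| =o |W|"
    using internalize_card_of_ordLeq2[of Z X] by blast
  then have "stable |W|"
    using assms(2) Z(2) card_of_ordIso_finite unfolding hereditarily_stable_def by blast
  then show "stable |Z|"
    using W(2) by (rule stable_ordIso1)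
qed

lemma is_aleph_infinite: "is_aleph n X \<Longrightarrow> infinite X"
proof (induction n arbitrary: X)
  case 0
  then have "natLeq \<le>o |X|"
    by (simp add: ordIso_iff_ordLeq)
  then show ?case
    using infinite_iff_natLeq_ordLeq by blast
next
  case (Suc n)
  then obtain C where "C \<subseteq> X" "is_aleph n C"
    by auto
  then show ?case
    using Suc.IH finite_subset by blast
qed

lemma stable_cardSuc_card_of:
  assumes "infinite C"
  shows "stable (cardSuc |C| )"
proof -
  have "Cinfinite |C|"
    using assms by (simp add: cinfinite_def card_of_card_order_on Field_card_of)
  then show ?thesis
    using Cinfinite_cardSuc regularCard_cardSuc regularCard_stable cinfinite_def by blast
qed

lemma hereditarily_stable_natLeq:
  assumes "|X| =o natLeq"
  shows "hereditarily_stable X"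
  unfolding hereditarily_stable_def
proof (intro allI impI)
  fix Y assume Y: "Y \<subseteq> X" "infinite Y"
  have "|Y| \<le>o natLeq"
    using card_of_mono1[OF Y(1)] assms by (rule ordLeq_ordIso_trans)
  then have "|Y| =o natLeq"
    using ordIso_natLeq_iff_ordLeq_natLeq[OF Y(2)] by blast
  then show "stable |Y|"
    by (rule stable_ordIso1[OF stable_natLeq])
qed

lemma hereditarily_stable_cardSuc:
  assumes "infinite C" and "hereditarily_stable C" and "|X| =o cardSuc |C|"
  shows "hereditarily_stable X"
  unfolding hereditarily_stable_def
proof (intro allI impI)
  fix Y assume Y: "Y \<subseteq> X" "infinite Y"
  show "stable |Y|"
  proof (cases "|Y| <o |X|")
    case True
    then have "|Y| <o cardSuc |C|"
      using assms(3) by (rule ordLess_ordIso_trans)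
    then have "|Y| \<le>o |C|"
      using cardSuc_ordLeq_ordLess[OF card_of_Card_order card_of_Card_order] by blast
    then have "hereditarily_stable Y"
      using assms(2) by (rule hereditarily_stable_ordLeq)
    then show ?thesis
      using Y(2) unfolding hereditarily_stable_def by blast
  next
    case False
    then have "|Y| =o |X|"
      using card_of_mono1[OF Y(1)] ordLeq_iff_ordLess_or_ordIso by blast
    then have "|Y| =o cardSuc |C|"
      using assms(3) by (rule ordIso_transitive)
    then show ?thesis
      using stable_cardSuc_card_of[OF assms(1)] stable_ordIso1 by blast
  qed
qed

lemma hereditarily_stable_is_aleph: "is_aleph n X \<Longrightarrow> hereditarily_stable X"
proof (induction n arbitrary: X)
  case 0
  then show ?case
    by (simp add: hereditarily_stable_natLeq)
next
  case (Suc n)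
  then obtain C where C: "is_aleph n C" "|X| =o cardSuc |C|" "C \<subseteq> X"
    by auto
  show ?case
    using is_aleph_infinite[OF C(1)] Suc.IH[OF C(1)] C(2) by (rule hereditarily_stable_cardSuc)
qed

lemma stable_is_aleph: "is_aleph n X \<Longrightarrow> stable |X|"
  using hereditarily_stable_is_aleph is_aleph_infinite unfolding hereditarily_stable_def by blast

lemma is_aleph_ordIso: "is_aleph n X \<Longrightarrow> is_aleph n Y \<Longrightarrow> |X| =o |Y|"
proof (induction n arbitrary: X Y)
  case 0
  then have "|X| =o natLeq" "|Y| =o natLeq"
    by simp_all
  then show ?case
    using ordIso_symmetric ordIso_transitive by metis
next
  case (Suc n)
  then obtain C C' where C: "C \<subseteq> X" "is_aleph n C" "|X| =o cardSuc |C|"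
      "C' \<subseteq> Y" "is_aleph n C'" "|Y| =o cardSuc |C'|"
    by auto
  have "|C| =o |C'|"
    by (rule Suc.IH[OF C(2,5)])
  then have "cardSuc |C| =o cardSuc |C'|"
    using cardSuc_invar_ordIso[OF card_of_Card_order card_of_Card_order] by blast
  then have "|X| =o cardSuc |C'|"
    using C(3) ordIso_transitive by metis
  then show ?case
    using C(6) ordIso_symmetric ordIso_transitive by metis
qed

lemma is_aleph_ordLess: "is_aleph m X \<Longrightarrow> is_aleph n Y \<Longrightarrow> m < n \<Longrightarrow> |X| <o |Y|"
proof (induction n arbitrary: Y)
  case 0
  then show ?case by simp
next
  case (Suc n)
  then obtain C where C: "C \<subseteq> Y" "is_aleph n C" "|Y| =o cardSuc |C|"
    by auto
  have "|X| \<le>o |C|"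
  proof (cases "m = n")
    case True
    then show ?thesis
      using Suc.prems(1) C(2) is_aleph_ordIso ordIso_iff_ordLeq by blast
  next
    case False
    then have "m < n"
      using Suc.prems(3) by simp
    then show ?thesis
      using Suc.IH[OF Suc.prems(1) C(2)] ordLess_imp_ordLeq by blast
  qed
  then have "|X| <o cardSuc |C|"
    using cardSuc_greater[OF card_of_Card_order] by (rule ordLeq_ordLess_trans)
  then show ?case
    using C(3) ordIso_symmetric ordLess_ordIso_trans by metis
qed

subsection \<open>Sets of size at most aleph omega\<close>

lemma is_aleph_omega_bounded:
  assumes "is_aleph_omega B" and "|X| <o |B|"
  obtains n D where "D \<subseteq> B" "is_aleph n D" "|X| \<le>o |D|"
proof -
  obtain W where W: "W \<subseteq> B" "|X| =o |W|"
    using internalize_card_of_ordLeq2[of X B] ordLess_imp_ordLeq[OF assms(2)] by blast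
  have "|W| <o |B|"
    using ordIso_symmetric[OF W(2)] assms(2) by (rule ordIso_ordLess_trans)
  then obtain n D where D: "D \<subseteq> B" "is_aleph n D" "|W| \<le>o |D|"
    using assms(1) W(1) unfolding is_aleph_omega_def by blast
  show thesis
    by (rule that[OF D(1,2) ordIso_ordLeq_trans[OF W(2) D(3)]])
qed

lemma hereditarily_stable_ordLess_aleph_omega:
  assumes "card_le_aleph_omega B" and "|A| <o |B|"
  shows "hereditarily_stable A"
proof (cases "\<exists>n. is_aleph n B")
  case True
  then obtain n where "is_aleph n B"
    by blast
  then show ?thesis
    using hereditarily_stable_ordLeq[OF ordLess_imp_ordLeq[OF assms(2)]] hereditarily_stable_is_aleph
    by blast
next
  case False
  then have "is_aleph_omega B"
    using assms(1) unfolding card_le_aleph_omega_def by blast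
  then obtain n D where "D \<subseteq> B" "is_aleph n D" "|A| \<le>o |D|"
    using assms(2) by (rule is_aleph_omega_bounded)
  then show ?thesis
    using hereditarily_stable_ordLeq hereditarily_stable_is_aleph by blast
qed

lemma is_aleph_omega_ordIso_if_unbounded:
  assumes "is_aleph_omega B" and "D \<subseteq> B"
    and unbounded: "\<And>n. \<exists>k > n. \<exists>X \<subseteq> B. is_aleph k X \<and> |X| \<le>o |D|"
  shows "|D| =o |B|"
proof -
  have "\<not> |D| <o |B|"
  proof
    assume "|D| <o |B|"
    with assms(1) obtain m D' where D': "D' \<subseteq> B" "is_aleph m D'" "|D| \<le>o |D'|"
      by (rule is_aleph_omega_bounded)
    obtain k X where X: "k > m" "X \<subseteq> B" "is_aleph k X" "|X| \<le>o |D|"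
      using unbounded by blast
    have "|D'| <o |X|"
      using D'(2) X(3,1) by (rule is_aleph_ordLess)
    then have "|D'| <o |D|"
      using X(4) by (rule ordLess_ordLeq_trans)
    then show False
      using D'(3) not_ordLess_ordLeq by blast
  qed
  then have "|B| \<le>o |D|"
    using not_ordLess_iff_ordLeq[OF card_of_Well_order card_of_Well_order] by blast
  then show ?thesis
    using card_of_mono1[OF assms(2)] ordIso_iff_ordLeq by blast
qed

subsection \<open>Bipartite graphs with infinite neighbourhoods\<close>

lemma inf_nbr_bigraph_restrict:
  assumes "\<forall>b\<in>B'. infinite {a \<in> A'. (a, b) \<in> E}"
  shows "inf_nbr_bigraph (E \<inter> (A' \<times> B')) A' B'"
proof -
  have "{a \<in> A'. (a, b) \<in> E \<inter> (A' \<times> B')} = {a \<in> A'. (a, b) \<in> E}" if "b \<in> B'" for b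
    using that by blast
  then show ?thesis
    using assms unfolding inf_nbr_bigraph_def by auto
qed

lemma inf_nbr_bigraph_UN:
  assumes "\<And>i. i \<in> I \<Longrightarrow> inf_nbr_bigraph (F i) (C i) (D i)"
  shows "inf_nbr_bigraph (\<Union>i\<in>I. F i) (\<Union>i\<in>I. C i) (\<Union>i\<in>I. D i)"
  unfolding inf_nbr_bigraph_def
proof
  show "(\<Union>i\<in>I. F i) \<subseteq> (\<Union>i\<in>I. C i) \<times> (\<Union>i\<in>I. D i)"
    using assms unfolding inf_nbr_bigraph_def by blast
  show "\<forall>b\<in>\<Union>i\<in>I. D i. infinite {a \<in> \<Union>i\<in>I. C i. (a, b) \<in> (\<Union>i\<in>I. F i)}"
  proof
    fix b assume "b \<in> (\<Union>i\<in>I. D i)"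
    then obtain i where i: "i \<in> I" "b \<in> D i"
      by blast
    then have "infinite {a \<in> C i. (a, b) \<in> F i}"
      using assms unfolding inf_nbr_bigraph_def by blast
    moreover have "{a \<in> C i. (a, b) \<in> F i} \<subseteq> {a \<in> \<Union>i\<in>I. C i. (a, b) \<in> (\<Union>i\<in>I. F i)}"
      using i(1) by blast
    ultimately show "infinite {a \<in> \<Union>i\<in>I. C i. (a, b) \<in> (\<Union>i\<in>I. F i)}"
      using finite_subset by blast
  qed
qed

lemma has_aleph0_subgraph_self:
  assumes "|A| =o natLeq" and "inf_nbr_bigraph E A B"
  shows "has_aleph0_subgraph E A B"
  unfolding has_aleph0_subgraph_def
  by (intro exI[of _ A] exI[of _ B] exI[of _ E]) (simp add: assms card_of_refl)

lemma has_aleph0_subgraph_mono: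
  assumes "has_aleph0_subgraph E' A' B'"
    and "E' \<subseteq> E" and "A' \<subseteq> A" and "B' \<subseteq> B" and "|B'| =o |B|"
  shows "has_aleph0_subgraph E A B"
proof -
  obtain C D F where CDF: "C \<subseteq> A'" "D \<subseteq> B'" "F \<subseteq> E'" "|C| =o natLeq" "|D| =o |B'|"
      "inf_nbr_bigraph F C D"
    using assms(1) unfolding has_aleph0_subgraph_def by blast
  have "|D| =o |B|"
    using CDF(5) assms(5) by (rule ordIso_transitive)
  then show ?thesis
    unfolding has_aleph0_subgraph_def
    by (intro exI[of _ C] exI[of _ D] exI[of _ F]) (use CDF assms(2-4) in auto)
qed

lemma has_aleph0_subgraph_UN:
  assumes "|I| \<le>o natLeq" and "i \<in> I"
    and sub: "\<And>n. n \<in> I \<Longrightarrow> C n \<subseteq> A \<and> D n \<subseteq> B \<and> F n \<subseteq> E \<and> |C n| =o natLeq \<and>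
      inf_nbr_bigraph (F n) (C n) (D n)"
    and "|\<Union>n\<in>I. D n| =o |B|"
  shows "has_aleph0_subgraph E A B"
proof -
  have "|\<Union>n\<in>I. C n| =o natLeq"
    using assms(1,2) by (rule card_of_UN_ordIso_natLeq) (use sub in blast)
  moreover have "inf_nbr_bigraph (\<Union>n\<in>I. F n) (\<Union>n\<in>I. C n) (\<Union>n\<in>I. D n)"
    by (rule inf_nbr_bigraph_UN) (use sub in blast)
  moreover have "(\<Union>n\<in>I. C n) \<subseteq> A" "(\<Union>n\<in>I. D n) \<subseteq> B" "(\<Union>n\<in>I. F n) \<subseteq> E"
    using sub by blast+
  ultimately show ?thesis
    unfolding has_aleph0_subgraph_def using assms(4)
    by (intro exI[of _ "\<Union>n\<in>I. C n"] exI[of _ "\<Union>n\<in>I. D n"] exI[of _ "\<Union>n\<in>I. F n"]) simp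
qed

subsection \<open>The regular case\<close>

lemma underS_card_of:
  assumes "a \<in> A"
  shows "underS (card_of A) a \<subseteq> A" and "|underS (card_of A) a| <o |A|"
proof -
  show "underS (card_of A) a \<subseteq> A"
    using underS_Field[of _ "|A|" a] by (auto simp: Field_card_of)
  show "|underS (card_of A) a| <o |A|"
    by (rule card_of_underS[OF card_of_Card_order]) (simp add: assms Field_card_of)
qed

lemma small_subset_underS:
  assumes "stable |A|" and "infinite A" and "M \<subseteq> A" and "|M| <o |A|"
  shows "\<exists>a\<in>A. M \<subseteq> underS (card_of A) a"
proof -
  have "trans |A|" "antisym |A|"
    using card_of_Well_order[of A]
    unfolding well_order_on_def linear_order_on_def partial_order_on_def preorder_on_def by blast+
  then have chain: "relChain (card_of A) (underS (card_of A))"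
    unfolding relChain_def using underS_incr[of "card_of A"] by blast
  have reg: "regularCard |A|"
    by (rule stable_regularCard[OF card_of_Card_order _ assms(1)]) (simp add: Field_card_of assms(2))
  have "M \<subseteq> (\<Union>a\<in>Field |A|. underS (card_of A) a)"
  proof
    fix x assume "x \<in> M"
    then have x: "x \<in> Field |A|"
      using assms(3) by (auto simp: Field_card_of)
    have "\<not> finite (Field |A| )"
      using assms(2) by (simp add: Field_card_of)
    then obtain b where "b \<in> Field |A|" "x \<noteq> b" "(x, b) \<in> |A|"
      using infinite_Card_order_limit[OF card_of_Card_order _ x] by blast
    then show "x \<in> (\<Union>a\<in>Field |A|. underS (card_of A) a)"
      unfolding underS_def by blast
  qed
  from regularCard_UNION[OF card_of_Card_order reg chain this assms(4)]
  show ?thesis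
    by (simp add: Field_card_of)
qed

lemma stable_large_fibre:
  assumes "stable |B|" and "|A| <o |B|" and "g ` B \<subseteq> A"
  shows "\<exists>a\<in>A. |{b \<in> B. g b = a}| =o |B|"
proof (rule ccontr)
  assume no_large: "\<not> ?thesis"
  have "|{b \<in> B. g b = a}| <o |B|" if "a \<in> A" for a
  proof -
    have "|{b \<in> B. g b = a}| \<le>o |B|"
      by (rule card_of_mono1) blast
    then show ?thesis
      using no_large that ordLeq_iff_ordLess_or_ordIso by blast
  qed
  then have "|\<Union>a\<in>A. {b \<in> B. g b = a}| <o |B|"
    by (rule stable_UNION[OF assms(1,2)])
  moreover have "(\<Union>a\<in>A. {b \<in> B. g b = a}) = B"
    using assms(3) by blast
  ultimately show False
    using ordLess_irreflexive by auto
qed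

lemma inf_nbr_bigraph_bounded_below:
  assumes "infinite A" "stable |A|" "natLeq <o |A|" "stable |B|" "|A| <o |B|" "inf_nbr_bigraph E A B"
  shows "\<exists>a\<in>A. \<exists>D\<subseteq>B. |D| =o |B| \<and> (\<forall>b\<in>D. infinite {x \<in> underS (card_of A) a. (x, b) \<in> E})"
proof -
  have "\<exists>a\<in>A. infinite {x \<in> underS (card_of A) a. (x, b) \<in> E}" if b: "b \<in> B" for b
  proof -
    have "infinite {x \<in> A. (x, b) \<in> E}"
      using assms(6) b unfolding inf_nbr_bigraph_def by blast
    then obtain f :: "nat \<Rightarrow> _" where f: "inj f" "range f \<subseteq> {x \<in> A. (x, b) \<in> E}"
      using infinite_countable_subset by blast
    then have "|range f| =o |UNIV :: nat set|"
      using card_of_ordIso inj_on_imp_bij_betw ordIso_symmetric by blast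
    then have "|range f| <o |A|"
      using assms(3) card_of_nat ordIso_ordLess_trans ordIso_transitive by blast
    moreover have "range f \<subseteq> A"
      using f(2) by blast
    ultimately obtain a where a: "a \<in> A" "range f \<subseteq> underS (card_of A) a"
      using small_subset_underS assms(1,2) by blast
    then have "range f \<subseteq> {x \<in> underS (card_of A) a. (x, b) \<in> E}"
      using f(2) by blast
    moreover have "infinite (range f)"
      using f(1) finite_imageD infinite_UNIV_nat by blast
    ultimately show ?thesis
      using a(1) finite_subset by blast
  qed
  then obtain g where g: "\<And>b. b \<in> B \<Longrightarrow> g b \<in> A \<and> infinite {x \<in> underS (card_of A) (g b). (x, b) \<in> E}"
    by metis
  then obtain a where "a \<in> A" "|{b \<in> B. g b = a}| =o |B|"
    using stable_large_fibre[OF assms(4,5)] by blast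
  then show ?thesis
    using g by (intro bexI[of _ a] exI[of _ "{b \<in> B. g b = a}"]) auto
qed

lemma has_aleph0_subgraph_stable:
  assumes "infinite A" "hereditarily_stable A" "stable |B|" "|A| <o |B|" "inf_nbr_bigraph E A B"
  shows "has_aleph0_subgraph E A B"
  using assms
proof (induction A arbitrary: B E rule: wf_induct_rule[OF wf_inv_image[OF wf_ordLess, of card_of]])
  case (1 A)
  show ?case
  proof (cases "|A| =o natLeq")
    case True
    then show ?thesis
      using "1.prems"(5) has_aleph0_subgraph_self by blast
  next
    case False
    then have "natLeq <o |A|"
      using "1.prems"(1) infinite_iff_natLeq_ordLeq ordLeq_iff_ordLess_or_ordIso ordIso_symmetric by blast
    moreover have "stable |A|"
      using "1.prems"(1,2) unfolding hereditarily_stable_def by blast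
    ultimately obtain a D where a: "a \<in> A" and D: "D \<subseteq> B" "|D| =o |B|"
      and nbrs: "\<forall>b\<in>D. infinite {x \<in> underS (card_of A) a. (x, b) \<in> E}"
      using inf_nbr_bigraph_bounded_below "1.prems"(1,3,4,5) by blast
    define A' where "A' = underS (card_of A) a"
    have A'_sub: "A' \<subseteq> A" and A'_less: "|A'| <o |A|"
      unfolding A'_def using underS_card_of[OF a] by blast+
    have "infinite D"
      using "1.prems"(1,4) D(2) card_of_ordIso_finite card_of_ordLeq_infinite ordLess_imp_ordLeq by blast
    then obtain b where "b \<in> D"
      using infinite_imp_nonempty by blast
    then have "infinite A'"
      using nbrs finite_subset[of "{x \<in> A'. (x, b) \<in> E}" A'] unfolding A'_def by blast
    moreover have "hereditarily_stable A'"
      using "1.prems"(2) A'_sub unfolding hereditarily_stable_def by blast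
    moreover have "stable |D|"
      using "1.prems"(3) D(2) stable_ordIso1 by blast
    moreover have "|A'| <o |D|"
      using A'_less "1.prems"(4) D(2) ordLess_transitive ordLess_ordIso_trans ordIso_symmetric by blast
    moreover have "inf_nbr_bigraph (E \<inter> (A' \<times> D)) A' D"
      using nbrs inf_nbr_bigraph_restrict unfolding A'_def by blast
    ultimately have "has_aleph0_subgraph (E \<inter> (A' \<times> D)) A' D"
      using "1.IH"[of A'] A'_less by simp
    then show ?thesis
      using has_aleph0_subgraph_mono A'_sub D by blast
  qed
qed

lemma has_aleph0_subgraph_stable_subset:
  assumes "infinite A" "hereditarily_stable A" "D \<subseteq> B" "stable |D|" "|A| <o |D|" "inf_nbr_bigraph E A B"
  shows "has_aleph0_subgraph E A D"
proof -
  have "inf_nbr_bigraph (E \<inter> (A \<times> D)) A D"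
    by (rule inf_nbr_bigraph_restrict) (use assms(3,6) in \<open>auto simp: inf_nbr_bigraph_def\<close>)
  with assms(1,2,4,5) have "has_aleph0_subgraph (E \<inter> (A \<times> D)) A D"
    by (rule has_aleph0_subgraph_stable)
  then show ?thesis
    by (rule has_aleph0_subgraph_mono) (auto simp: card_of_refl)
qed

subsection \<open>The case aleph omega\<close>

lemma has_aleph0_subgraph_aleph_omega:
  assumes "infinite A" "|A| <o |B|" "is_aleph_omega B" "inf_nbr_bigraph E A B"
  shows "has_aleph0_subgraph E A B"
proof -
  obtain n0 D0 where D0: "D0 \<subseteq> B" "is_aleph n0 D0" "|A| \<le>o |D0|"
    using assms(3,2) by (rule is_aleph_omega_bounded)
  have A_stable: "hereditarily_stable A"
    using D0(3) hereditarily_stable_is_aleph[OF D0(2)] by (rule hereditarily_stable_ordLeq)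
  have "\<forall>n. \<exists>X. X \<subseteq> B \<and> is_aleph n X"
    using assms(3) unfolding is_aleph_omega_def by blast
  then obtain Dn where Dn: "\<And>n. Dn n \<subseteq> B" "\<And>n. is_aleph n (Dn n)"
    by metis
  define I where "I = {n. n0 < n}"
  have "has_aleph0_subgraph E A (Dn n)" if "n \<in> I" for n
  proof -
    have "|D0| <o |Dn n|"
      using that unfolding I_def by (intro is_aleph_ordLess[OF D0(2) Dn(2)]) simp
    with D0(3) have "|A| <o |Dn n|"
      by (rule ordLeq_ordLess_trans)
    with assms(1) A_stable Dn(1) stable_is_aleph[OF Dn(2)] show ?thesis
      using assms(4) by (rule has_aleph0_subgraph_stable_subset)
  qed
  then obtain C D F where sub: "\<And>n. n \<in> I \<Longrightarrow> C n \<subseteq> A \<and> D n \<subseteq> Dn n \<and> F n \<subseteq> E \<and>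
      |C n| =o natLeq \<and> |D n| =o |Dn n| \<and> inf_nbr_bigraph (F n) (C n) (D n)"
    unfolding has_aleph0_subgraph_def by metis
  have "|\<Union>n\<in>I. D n| =o |B|"
  proof (rule is_aleph_omega_ordIso_if_unbounded[OF assms(3)])
    show "(\<Union>n\<in>I. D n) \<subseteq> B"
      using sub Dn(1) by blast
    fix m
    define k where "k = Suc (max m n0)"
    have k: "k \<in> I" "k > m"
      unfolding k_def I_def by auto
    have "|Dn k| \<le>o |D k|"
      using sub[OF k(1)] ordIso_symmetric ordIso_imp_ordLeq by blast
    moreover have "|D k| \<le>o |\<Union>n\<in>I. D n|"
      using k(1) by (intro card_of_mono1) blast
    ultimately have "|Dn k| \<le>o |\<Union>n\<in>I. D n|"
      by (rule ordLeq_transitive)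
    then show "\<exists>k > m. \<exists>X \<subseteq> B. is_aleph k X \<and> |X| \<le>o |\<Union>n\<in>I. D n|"
      using k(2) Dn by blast
  qed
  moreover have "|I| \<le>o natLeq"
    using card_of_mono1[OF subset_UNIV] card_of_nat by (rule ordLeq_ordIso_trans)
  moreover have "Suc n0 \<in> I"
    unfolding I_def by simp
  ultimately show ?thesis
    using sub Dn(1) by (intro has_aleph0_subgraph_UN[of I "Suc n0" C A D B F E]) blast+
qed

theorem corollary4p2:
  fixes E :: "('a \<times> 'b) set" and A :: "'a set" and B :: "'b set"
  assumes "infinite A"
    and "|A| <o |B|"
    and "card_le_aleph_omega B"
    and "inf_nbr_bigraph E A B"
  shows "\<exists>C D F. C \<subseteq> A \<and> D \<subseteq> B \<and> F \<subseteq> E \<and>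
           |C| =o natLeq \<and> |D| =o |B| \<and> inf_nbr_bigraph F C D"
proof -
  have "has_aleph0_subgraph E A B"
  proof (cases "\<exists>n. is_aleph n B")
    case True
    then obtain n where "is_aleph n B"
      by blast
    with assms show ?thesis
      by (intro has_aleph0_subgraph_stable hereditarily_stable_ordLess_aleph_omega stable_is_aleph)
  next
    case False
    with assms(3) have "is_aleph_omega B"
      unfolding card_le_aleph_omega_def by blast
    with assms show ?thesis
      by (intro has_aleph0_subgraph_aleph_omega)
  qed
  then show ?thesis
    unfolding has_aleph0_subgraph_def .
qed

end
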